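(* Let $\mathbb X=\ell^\infty(\mathbb C)$, the real Banach space of bounded complex sequences $(x_k)_{k\in\mathbb N}$ with the supremum norm. For $t\in[0,1]$ define $g_t((x_k))=(t\,x_k e^{i\pi/(2k)})$ and $f_t((x_k))=(\tfrac t4x_k+1-\tfrac t4)$, and let $F^g_t=\{f_t,g_t\}$. For $t\in[0,1)$ both maps are contractions, so $F^g_t$ has a unique attractor $A_t$ (nonempty compact with $A_t=f_t(A_t)\cup g_t(A_t)$). Then there is no sequence $t_n\in[0,1)$ with $t_n\to1$ such that $(A_{t_n})$ converges in the Hausdorff metric; in particular $F^g_t$ has no upper transition attractor. More precisely, for every $s\in[\tfrac12,1)$ there is $t_0<1$ such that $h(A_t,A_s)\ge\tfrac12$ for all $t\in[t_0,1)$.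
   Context: $h$ denotes the Hausdorff metric on nonempty compact subsets of $\mathbb X$. An upper transition attractor of $F^g_t$ is a compact set $A^\bullet$ for which there is an increasing sequence $t_n\in[0,1)$, $t_n\to1$, with $h(A_{t_n},A^\bullet)\to0$. *)

theory Defs
  imports "HOL-Analysis.Analysis"
begin

text \<open>The space X = l-infinity(C): bounded (automatically continuous, nat being discrete)
  complex sequences, a real Banach space with the sup norm.  Index k of the paper
  (k = 1,2,...) corresponds to index k - 1 here, i.e. coordinate n :: nat stands for k = n+1.\<close>
type_synonym linf = "nat \<Rightarrow>\<^sub>C complex"

definition hausdorff_dist :: "'a::metric_space set \<Rightarrow> 'a set \<Rightarrow> real" where
  "hausdorff_dist A B = max (SUP a\<in>A. infdist a B) (SUP b\<in>B. infdist b A)"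

definition g_map :: "real \<Rightarrow> linf \<Rightarrow> linf" where
  "g_map t x = Bcontfun (\<lambda>n. complex_of_real t * apply_bcontfun x n
                                * cis (pi / (2 * real (n + 1))))"

definition f_map :: "real \<Rightarrow> linf \<Rightarrow> linf" where
  "f_map t x = Bcontfun (\<lambda>n. complex_of_real (t / 4) * apply_bcontfun x n
                                + complex_of_real (1 - t / 4))"

definition attractor :: "real \<Rightarrow> linf set" where
  "attractor t = (THE A. A \<noteq> {} \<and> compact A \<and> A = f_map t ` A \<union> g_map t ` A)"

end

theory Submission
  imports Defs
begin

(* For t < 1 the attractor A_t is the closure of the orbit of the fixed point (1,1,1,...) of f_t.
   In coordinate k every orbit point has the form (t e^(i theta_k))^m y with theta_k = pi/(2k) and
   y in the disc of radius t/4 around 1 - t/4.  Once s^M < 1/4, in coordinate k = 2M+1 such a point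
   is either short (m >= M) or rotated by at most pi/3 (m < M), so A_s keeps distance 3/4 from -1
   there.  But g_t^(2k) rotates (1,1,...) by exactly pi in coordinate k, landing at -t^(2k), which is
   within 1/4 of -1 for t close to 1.  Hence h(A_t, A_s) >= 1/2, and the triangle inequality for h
   rules out a Hausdorff limit of A_(t_n). *)

lemma bdd_above_infdist_image:
  assumes "bounded A" "B \<noteq> {}"
  shows "bdd_above ((\<lambda>a. infdist a B) ` A)"
proof -
  obtain b where "b \<in> B" using assms(2) by blast
  moreover obtain e where "\<forall>a\<in>A. dist b a \<le> e" using assms(1) bounded_any_center by blast
  ultimately show ?thesis
    by (intro bdd_aboveI2[of _ _ e] infdist_le2) (auto simp: dist_commute)
qed

lemma infdist_image_le:
  assumes "B \<noteq> {}" "0 \<le> r" "\<And>x y. dist (h x) (h y) \<le> r * dist x y"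
  shows "infdist (h x) (h ` B) \<le> r * infdist x B"
proof (cases "r = 0")
  case True
  obtain b where "b \<in> B" using assms(1) by blast
  then have "infdist (h x) (h ` B) \<le> dist (h x) (h b)" by (intro infdist_le) auto
  also have "\<dots> \<le> 0" using assms(3)[of x b] True by simp
  finally show ?thesis using True by simp
next
  case False
  with assms(2) have "0 < r" by simp
  have "infdist (h x) (h ` B) / r \<le> infdist x B"
    unfolding infdist_notempty[OF assms(1)]
  proof (rule cINF_greatest[OF assms(1)])
    fix b assume "b \<in> B"
    then have "infdist (h x) (h ` B) \<le> r * dist x b"
      using assms(3)[of x b] by (intro infdist_le2) auto
    then show "infdist (h x) (h ` B) / r \<le> dist x b" using \<open>0 < r\<close> by (simp add: field_simps)
  qed
  then show ?thesis using \<open>0 < r\<close> by (simp add: field_simps)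
qed

lemma closure_image_eq_image_closure:
  fixes h :: "'a::topological_space \<Rightarrow> 'b::t2_space"
  assumes "compact (closure S)" "continuous_on (closure S) h"
  shows "closure (h ` S) = h ` closure S"
proof
  have "closed (h ` closure S)"
    using assms by (intro compact_imp_closed compact_continuous_image)
  then show "closure (h ` S) \<subseteq> h ` closure S"
    by (intro closure_minimal) (auto intro: closure_subset[THEN subsetD])
  show "h ` closure S \<subseteq> closure (h ` S)"
    using assms(2) by (rule continuous_image_closure_subset) simp
qed

lemma complete_UNIV_bcontfun: "complete (UNIV :: ('a::topological_space \<Rightarrow>\<^sub>C 'b::complete_space) set)"
proof (rule completeI)
  fix f :: "nat \<Rightarrow> 'a \<Rightarrow>\<^sub>C 'b" assume "Cauchy f"
  then obtain g where "uniform_limit UNIV f g sequentially"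
    using uniformly_convergent_eq_cauchy[of "\<lambda>_. True" f]
    unfolding Cauchy_def uniform_limit_sequentially_iff
    by (metis dist_fun_lt_imp_dist_val_lt)
  then obtain l where "f \<longlonglongrightarrow> l"
    using uniform_limit_bcontfunE[OF _ sequentially_bot] by metis
  then show "\<exists>l\<in>UNIV. f \<longlonglongrightarrow> l" by blast
qed

section \<open>Hausdorff distance\<close>

lemma hausdorff_dist_commute: "hausdorff_dist A B = hausdorff_dist B A"
  unfolding hausdorff_dist_def by (simp add: max.commute)

lemma infdist_le_hausdorff_dist:
  assumes "bounded A" "B \<noteq> {}" "a \<in> A"
  shows "infdist a B \<le> hausdorff_dist A B"
proof -
  have "infdist a B \<le> (SUP a\<in>A. infdist a B)"
    using bdd_above_infdist_image[OF assms(1,2)] assms(3) by (rule cSUP_upper2) simp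
  then show ?thesis unfolding hausdorff_dist_def by simp
qed

lemma SUP_infdist_le_add:
  fixes A B C :: "'a::metric_space set"
  assumes "A \<noteq> {}" "bounded A" "B \<noteq> {}" "bounded B" "C \<noteq> {}"
  shows "(SUP a\<in>A. infdist a C) \<le> (SUP a\<in>A. infdist a B) + (SUP b\<in>B. infdist b C)"
proof (rule cSUP_least[OF assms(1)])
  fix a assume "a \<in> A"
  have "infdist a C - (SUP b\<in>B. infdist b C) \<le> infdist a B"
    unfolding infdist_notempty[OF assms(3)]
  proof (rule cINF_greatest[OF assms(3)])
    fix b assume "b \<in> B"
    have "infdist b C \<le> (SUP b\<in>B. infdist b C)"
      using bdd_above_infdist_image[OF assms(4,5)] \<open>b \<in> B\<close> by (rule cSUP_upper2) simp
    then show "infdist a C - (SUP b\<in>B. infdist b C) \<le> dist a b"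
      using infdist_triangle[of a C b] by simp
  qed
  moreover have "infdist a B \<le> (SUP a\<in>A. infdist a B)"
    using bdd_above_infdist_image[OF assms(2,3)] \<open>a \<in> A\<close> by (rule cSUP_upper2) simp
  ultimately show "infdist a C \<le> (SUP a\<in>A. infdist a B) + (SUP b\<in>B. infdist b C)" by simp
qed

lemma hausdorff_dist_triangle:
  fixes A B C :: "'a::metric_space set"
  assumes "A \<noteq> {}" "bounded A" "B \<noteq> {}" "bounded B" "C \<noteq> {}" "bounded C"
  shows "hausdorff_dist A C \<le> hausdorff_dist A B + hausdorff_dist B C"
  using SUP_infdist_le_add[of A B C] SUP_infdist_le_add[of C B A] assms
  unfolding hausdorff_dist_def by fastforce

section \<open>The attractor of a pair of contractions\<close>

primrec ifs_level :: "('a \<Rightarrow> 'a) \<Rightarrow> ('a \<Rightarrow> 'a) \<Rightarrow> 'a \<Rightarrow> nat \<Rightarrow> 'a set" where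
  "ifs_level F G p 0 = {p}"
| "ifs_level F G p (Suc n) = F ` ifs_level F G p n \<union> G ` ifs_level F G p n"

definition ifs_orbit :: "('a \<Rightarrow> 'a) \<Rightarrow> ('a \<Rightarrow> 'a) \<Rightarrow> 'a \<Rightarrow> 'a set" where
  "ifs_orbit F G p = (\<Union>n. ifs_level F G p n)"

lemma finite_ifs_level: "finite (ifs_level F G p n)"
  by (induction n) auto

lemma funpow_in_ifs_level: "(G ^^ m) p \<in> ifs_level F G p m"
  by (induction m) auto

lemma start_in_ifs_orbit: "p \<in> ifs_orbit F G p"
  unfolding ifs_orbit_def by (rule UN_I[of 0]) simp_all

lemma ifs_level_subset_ifs_orbit: "ifs_level F G p n \<subseteq> ifs_orbit F G p"
  unfolding ifs_orbit_def by blast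

lemma ifs_orbit_invariant:
  assumes "F p = p"
  shows "ifs_orbit F G p = F ` ifs_orbit F G p \<union> G ` ifs_orbit F G p"
proof
  show "ifs_orbit F G p \<subseteq> F ` ifs_orbit F G p \<union> G ` ifs_orbit F G p"
  proof
    fix x assume "x \<in> ifs_orbit F G p"
    then obtain n where x: "x \<in> ifs_level F G p n" unfolding ifs_orbit_def by blast
    show "x \<in> F ` ifs_orbit F G p \<union> G ` ifs_orbit F G p"
    proof (cases n)
      case 0
      then have "x = F p" using x assms by simp
      then show ?thesis using start_in_ifs_orbit[of p F G] by blast
    next
      case (Suc m)
      then have "x \<in> F ` ifs_level F G p m \<union> G ` ifs_level F G p m" using x by simp
      moreover have "F ` ifs_level F G p m \<union> G ` ifs_level F G p m
          \<subseteq> F ` ifs_orbit F G p \<union> G ` ifs_orbit F G p"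
        by (intro Un_mono image_mono ifs_level_subset_ifs_orbit)
      ultimately show ?thesis by (rule rev_subsetD)
    qed
  qed
  show "F ` ifs_orbit F G p \<union> G ` ifs_orbit F G p \<subseteq> ifs_orbit F G p"
  proof
    fix x assume "x \<in> F ` ifs_orbit F G p \<union> G ` ifs_orbit F G p"
    then obtain y where y: "y \<in> ifs_orbit F G p" "x = F y \<or> x = G y" by blast
    then obtain n where "y \<in> ifs_level F G p n" unfolding ifs_orbit_def by blast
    then have "x \<in> ifs_level F G p (Suc n)" using y(2) by auto
    then show "x \<in> ifs_orbit F G p" using ifs_level_subset_ifs_orbit[of F G p "Suc n"] by blast
  qed
qed

locale contracting_pair =
  fixes F G :: "'a::metric_space \<Rightarrow> 'a" and r :: real
  assumes complete_ambient: "complete (UNIV :: 'a set)"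
    and dist_F_le: "dist (F x) (F y) \<le> r * dist x y"
    and dist_G_le: "dist (G x) (G y) \<le> r * dist x y"
    and factor_nonneg: "0 \<le> r" and factor_less_one: "r < 1"
begin

lemma dist_le_if_map: "h \<in> {F, G} \<Longrightarrow> dist (h x) (h y) \<le> r * dist x y"
  by (cases "h = F") (auto simp: dist_F_le dist_G_le)

definition orbit_radius :: "'a \<Rightarrow> real" where
  "orbit_radius p = (dist (F p) p + dist (G p) p) / (1 - r)"

lemma orbit_radius_nonneg: "0 \<le> orbit_radius p"
  using factor_less_one by (simp add: orbit_radius_def)

lemma dist_ifs_level_le: "x \<in> ifs_level F G p n \<Longrightarrow> dist x p \<le> orbit_radius p"
proof (induction n arbitrary: x)
  case (Suc n)
  obtain h y where h: "h \<in> {F, G}" and y: "y \<in> ifs_level F G p n" and x: "x = h y"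
    using Suc.prems by auto
  have "dist (h p) p \<le> (1 - r) * orbit_radius p"
    using h factor_less_one by (auto simp: orbit_radius_def)
  moreover have "dist x p \<le> r * dist y p + dist (h p) p"
    using dist_triangle[of x p "h p"] dist_le_if_map[OF h, of y p] x by simp
  moreover have "r * dist y p \<le> r * orbit_radius p"
    by (rule mult_left_mono[OF Suc.IH[OF y] factor_nonneg])
  ultimately show ?case by (simp add: algebra_simps)
qed (simp add: orbit_radius_nonneg)

lemma ifs_level_approx:
  "x \<in> ifs_level F G p n \<Longrightarrow>
    \<exists>z\<in>(\<Union>m\<le>N. ifs_level F G p m). dist x z \<le> r ^ N * orbit_radius p"
proof (induction N arbitrary: n x)
  case 0
  then show ?case using dist_ifs_level_le by force
next
  case (Suc N)
  show ?case
  proof (cases n)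
    case 0
    then have "x = p" using Suc.prems by simp
    moreover have "p \<in> (\<Union>m\<le>Suc N. ifs_level F G p m)" by (auto intro: bexI[of _ 0])
    ultimately show ?thesis
      by (intro bexI[of _ p]) (use factor_nonneg orbit_radius_nonneg[of p] in auto)
  next
    case (Suc n')
    then obtain h y where h: "h \<in> {F, G}" and y: "y \<in> ifs_level F G p n'" and x: "x = h y"
      using Suc.prems by auto
    obtain z m where z: "z \<in> ifs_level F G p m" "m \<le> N" and yz: "dist y z \<le> r ^ N * orbit_radius p"
      using Suc.IH[OF y] by blast
    have "h z \<in> (\<Union>m\<le>Suc N. ifs_level F G p m)"
      using h z by (auto intro!: bexI[of _ "Suc m"])
    moreover have "dist x (h z) \<le> r * (r ^ N * orbit_radius p)"
      using dist_le_if_map[OF h, of y z] mult_left_mono[OF yz factor_nonneg] x by simp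
    ultimately show ?thesis by (intro bexI[of _ "h z"]) auto
  qed
qed

lemma compact_closure_ifs_orbit: "compact (closure (ifs_orbit F G p))"
  unfolding compact_eq_totally_bounded
proof (intro conjI allI impI)
  show "complete (closure (ifs_orbit F G p))"
    by (rule complete_closed_subset[OF closed_closure subset_UNIV complete_ambient])
next
  fix e :: real assume "0 < e"
  define D where "D = orbit_radius p + 1"
  have "0 < D" using orbit_radius_nonneg by (simp add: D_def add_nonneg_pos)
  obtain N where N: "r ^ N < e / (2 * D)"
    using real_arch_pow_inv[of "e / (2 * D)" r] \<open>0 < e\<close> \<open>0 < D\<close> factor_less_one by auto
  have "closure (ifs_orbit F G p) \<subseteq> (\<Union>z\<in>(\<Union>m\<le>N. ifs_level F G p m). ball z e)"
  proof
    fix x assume "x \<in> closure (ifs_orbit F G p)"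
    then obtain y where y: "y \<in> ifs_orbit F G p" "dist y x < e / 2"
      using \<open>0 < e\<close> by (metis closure_approachable half_gt_zero)
    then obtain n where "y \<in> ifs_level F G p n" unfolding ifs_orbit_def by blast
    then obtain z where z: "z \<in> (\<Union>m\<le>N. ifs_level F G p m)" and "dist y z \<le> r ^ N * orbit_radius p"
      using ifs_level_approx[of y p n N] by blast
    moreover have "r ^ N * orbit_radius p \<le> r ^ N * D"
      unfolding D_def using factor_nonneg by (intro mult_left_mono) auto
    moreover have "r ^ N * D < e / 2" using N \<open>0 < D\<close> by (simp add: field_simps)
    ultimately have "dist z x < e" using y(2) dist_triangle[of z x y] by (simp add: dist_commute)
    with z show "x \<in> (\<Union>z\<in>(\<Union>m\<le>N. ifs_level F G p m). ball z e)" by auto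
  qed
  then show "\<exists>k. finite k \<and> closure (ifs_orbit F G p) \<subseteq> (\<Union>z\<in>k. ball z e)"
    by (intro exI[of _ "\<Union>m\<le>N. ifs_level F G p m"] conjI) (simp_all add: finite_ifs_level)
qed

lemma closure_ifs_orbit_invariant:
  assumes "F p = p"
  shows "closure (ifs_orbit F G p) = F ` closure (ifs_orbit F G p) \<union> G ` closure (ifs_orbit F G p)"
proof -
  have closure_image: "closure (h ` ifs_orbit F G p) = h ` closure (ifs_orbit F G p)"
    if "h \<in> {F, G}" for h
  proof (rule closure_image_eq_image_closure[OF compact_closure_ifs_orbit])
    show "continuous_on (closure (ifs_orbit F G p)) h"
      using dist_le_if_map[OF that] factor_nonneg
      by (intro lipschitz_on_continuous_on[where L = r] lipschitz_onI) auto
  qed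
  have "closure (ifs_orbit F G p) = closure (F ` ifs_orbit F G p \<union> G ` ifs_orbit F G p)"
    using ifs_orbit_invariant[of F p G, OF assms] by (rule arg_cong)
  also have "\<dots> = F ` closure (ifs_orbit F G p) \<union> G ` closure (ifs_orbit F G p)"
    by (simp add: closure_image)
  finally show ?thesis .
qed

lemma subset_closed_invariant:
  assumes A: "bounded A" "A \<noteq> {}" "A \<subseteq> F ` A \<union> G ` A"
    and B: "closed B" "B \<noteq> {}" "F ` B \<union> G ` B \<subseteq> B"
  shows "A \<subseteq> B"
proof -
  define M where "M = (SUP a\<in>A. infdist a B)"
  have le_M: "infdist a B \<le> M" if "a \<in> A" for a
    unfolding M_def using bdd_above_infdist_image[OF A(1) B(2)] that by (rule cSUP_upper2) simp
  have "M \<le> r * M"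
    unfolding M_def
  proof (rule cSUP_least[OF A(2)])
    fix a assume "a \<in> A"
    then have "a \<in> F ` A \<union> G ` A" using A(3) by (rule rev_subsetD)
    then obtain h a' where h: "h \<in> {F, G}" and a': "a' \<in> A" "a = h a'" by auto
    have "h ` B \<subseteq> B" using h B(3) by auto
    then have "infdist a B \<le> infdist (h a') (h ` B)"
      unfolding a'(2) by (rule infdist_mono) (use B(2) in simp)
    also have "\<dots> \<le> r * infdist a' B"
      using B(2) factor_nonneg dist_le_if_map[OF h] by (rule infdist_image_le)
    also have "\<dots> \<le> r * M" using le_M[OF a'(1)] factor_nonneg by (rule mult_left_mono)
    finally show "infdist a B \<le> r * (SUP a\<in>A. infdist a B)" unfolding M_def .
  qed
  moreover have "0 \<le> M"
  proof -
    obtain a where "a \<in> A" using A(2) by blast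
    then show ?thesis using le_M[of a] infdist_nonneg[of a B] by linarith
  qed
  ultimately have "M = 0" using factor_less_one by (smt (verit) mult_le_cancel_right1)
  show ?thesis
  proof
    fix a assume "a \<in> A"
    then have "infdist a B = 0" using le_M \<open>M = 0\<close> infdist_nonneg[of a B] by (simp add: antisym)
    then show "a \<in> B" using in_closed_iff_infdist_zero[OF B(1,2)] by simp
  qed
qed

theorem the_attractor_eq_closure_ifs_orbit:
  assumes "F p = p"
  shows "(THE A. A \<noteq> {} \<and> compact A \<and> A = F ` A \<union> G ` A) = closure (ifs_orbit F G p)"
proof (rule the_equality)
  let ?C = "closure (ifs_orbit F G p)"
  have C_ne: "?C \<noteq> {}" using closure_subset[of "ifs_orbit F G p"] start_in_ifs_orbit[of p F G] by blast
  have C_eq: "?C = F ` ?C \<union> G ` ?C" by (rule closure_ifs_orbit_invariant[OF assms])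
  show "?C \<noteq> {} \<and> compact ?C \<and> ?C = F ` ?C \<union> G ` ?C"
    by (rule conjI[OF C_ne conjI[OF compact_closure_ifs_orbit C_eq]])
  fix A assume A: "A \<noteq> {} \<and> compact A \<and> A = F ` A \<union> G ` A"
  note A = A[THEN conjunct1] A[THEN conjunct2, THEN conjunct1] A[THEN conjunct2, THEN conjunct2]
  have "A \<subseteq> ?C"
    by (rule subset_closed_invariant[OF compact_imp_bounded[OF A(2)] A(1) equalityD1[OF A(3)]
          closed_closure C_ne equalityD2[OF C_eq]])
  moreover have "?C \<subseteq> A"
    by (rule subset_closed_invariant[OF compact_imp_bounded[OF compact_closure_ifs_orbit] C_ne
          equalityD1[OF C_eq] compact_imp_closed[OF A(2)] A(1) equalityD2[OF A(3)]])
  ultimately show "A = ?C" by blast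
qed

end

lemma bcontfun_affine_coords:
  fixes x :: linf
  assumes "\<And>n. cmod (a n) \<le> C"
  shows "(\<lambda>n. a n * apply_bcontfun x n + b) \<in> bcontfun"
proof (rule bcontfun_normI)
  fix n
  have "cmod (a n * apply_bcontfun x n + b) \<le> cmod (a n) * cmod (apply_bcontfun x n) + cmod b"
    by (metis norm_mult norm_triangle_ineq)
  also have "\<dots> \<le> C * norm x + cmod b"
    using assms norm_bounded[of x n] order_trans[OF norm_ge_zero assms]
    by (intro add_right_mono mult_mono) auto
  finally show "cmod (a n * apply_bcontfun x n + b) \<le> C * norm x + cmod b" .
qed simp

lemma f_map_apply [simp]:
  "apply_bcontfun (f_map t x) n = complex_of_real (t/4) * apply_bcontfun x n + complex_of_real (1 - t/4)"
  unfolding f_map_def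
  by (subst Bcontfun_inverse[OF bcontfun_affine_coords[where C = "\<bar>t/4\<bar>"]]) simp_all

lemma g_map_apply [simp]:
  "apply_bcontfun (g_map t x) n = complex_of_real t * apply_bcontfun x n * cis (pi / (2 * real (n + 1)))"
proof -
  have "(\<lambda>n. complex_of_real t * cis (pi / (2 * real (n + 1))) * apply_bcontfun x n + 0) \<in> bcontfun"
    by (rule bcontfun_affine_coords[where C = "\<bar>t\<bar>"]) (simp add: norm_mult)
  then show ?thesis
    unfolding g_map_def by (subst Bcontfun_inverse) (simp_all add: ac_simps)
qed

lemma dist_f_map: "0 \<le> t \<Longrightarrow> dist (f_map t x) (f_map t y) \<le> t * dist x y"
proof (rule dist_bound)
  fix n assume "0 \<le> t"
  have "dist (apply_bcontfun (f_map t x) n) (apply_bcontfun (f_map t y) n)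
      = t/4 * dist (apply_bcontfun x n) (apply_bcontfun y n)"
    using \<open>0 \<le> t\<close> by (simp add: dist_norm norm_mult flip: right_diff_distrib del: of_real_divide)
  also have "\<dots> \<le> t/4 * dist x y"
    using \<open>0 \<le> t\<close> dist_bounded[of x n y] by (simp add: mult_left_mono)
  also have "\<dots> \<le> t * dist x y"
    using \<open>0 \<le> t\<close> by simp
  finally show "dist (apply_bcontfun (f_map t x) n) (apply_bcontfun (f_map t y) n) \<le> t * dist x y" .
qed

lemma dist_g_map: "0 \<le> t \<Longrightarrow> dist (g_map t x) (g_map t y) \<le> t * dist x y"
proof (rule dist_bound)
  fix n assume "0 \<le> t"
  have "dist (apply_bcontfun (g_map t x) n) (apply_bcontfun (g_map t y) n)
      = t * dist (apply_bcontfun x n) (apply_bcontfun y n)"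
    using \<open>0 \<le> t\<close> by (simp add: dist_norm norm_mult flip: right_diff_distrib left_diff_distrib)
  also have "\<dots> \<le> t * dist x y"
    using \<open>0 \<le> t\<close> dist_bounded[of x n y] by (simp add: mult_left_mono)
  finally show "dist (apply_bcontfun (g_map t x) n) (apply_bcontfun (g_map t y) n) \<le> t * dist x y" .
qed

definition ones :: linf where
  "ones = Bcontfun (\<lambda>_. 1)"

lemma ones_apply [simp]: "apply_bcontfun ones n = 1"
  unfolding ones_def by (simp add: Bcontfun_inverse const_bcontfun)

lemma f_map_ones: "f_map t ones = ones"
  by (rule bcontfun_eqI) (simp flip: of_real_mult of_real_add)

lemma contracting_pair_f_g_map:
  assumes "0 \<le> t" "t < 1"
  shows "contracting_pair (f_map t) (g_map t) t"
  using assms by unfold_locales (simp_all add: complete_UNIV_bcontfun dist_f_map dist_g_map)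

lemma attractor_eq_closure_ifs_orbit:
  assumes "0 \<le> t" "t < 1"
  shows "attractor t = closure (ifs_orbit (f_map t) (g_map t) ones)"
  unfolding attractor_def
  by (rule contracting_pair.the_attractor_eq_closure_ifs_orbit[OF contracting_pair_f_g_map[OF assms] f_map_ones])

lemma compact_attractor:
  assumes "0 \<le> t" "t < 1"
  shows "compact (attractor t)"
  unfolding attractor_eq_closure_ifs_orbit[OF assms]
  by (rule contracting_pair.compact_closure_ifs_orbit[OF contracting_pair_f_g_map[OF assms]])

lemma ifs_orbit_subset_attractor:
  "0 \<le> t \<Longrightarrow> t < 1 \<Longrightarrow> ifs_orbit (f_map t) (g_map t) ones \<subseteq> attractor t"
  by (simp add: attractor_eq_closure_ifs_orbit closure_subset)

lemma attractor_nonempty: "0 \<le> t \<Longrightarrow> t < 1 \<Longrightarrow> attractor t \<noteq> {}"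
  using ifs_orbit_subset_attractor[of t] start_in_ifs_orbit[of ones "f_map t" "g_map t"] by blast

section \<open>Separation of the attractors\<close>

lemma g_map_funpow_apply:
  "apply_bcontfun ((g_map t ^^ m) x) k
     = (complex_of_real t * cis (pi / (2 * real (k + 1)))) ^ m * apply_bcontfun x k"
  by (induction m) (simp_all add: algebra_simps)

lemma norm_le_one_if_in_cball:
  assumes "y \<in> cball (complex_of_real (1 - s/4)) (s/4)" "s \<le> 4"
  shows "cmod y \<le> 1"
proof -
  have "cmod y \<le> cmod (complex_of_real (1 - s/4)) + dist (complex_of_real (1 - s/4)) y"
    by (metis dist_norm norm_minus_commute norm_triangle_sub)
  moreover have "cmod (complex_of_real (1 - s/4)) = 1 - s/4"
    using assms(2) by (subst norm_of_real) simp
  moreover have "dist (complex_of_real (1 - s/4)) y \<le> s/4"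
    using assms(1) by (simp only: mem_cball)
  ultimately show ?thesis by linarith
qed

lemma ifs_level_coord_eq:
  assumes "0 \<le> s" "s \<le> 1" "x \<in> ifs_level (f_map s) (g_map s) ones n"
  shows "\<exists>m. \<exists>y\<in>cball (complex_of_real (1 - s/4)) (s/4).
           apply_bcontfun x k = (complex_of_real s * cis (pi / (2 * real (k + 1)))) ^ m * y"
  using assms(3)
proof (induction n arbitrary: x)
  case 0
  then show ?case using assms(1) by (intro exI[of _ 0] bexI[of _ 1]) (simp_all add: dist_norm)
next
  case (Suc n)
  let ?w = "complex_of_real s * cis (pi / (2 * real (k + 1)))"
  obtain x' where x': "x' \<in> ifs_level (f_map s) (g_map s) ones n" "x = f_map s x' \<or> x = g_map s x'"
    using Suc.prems by auto
  obtain m y where y: "y \<in> cball (complex_of_real (1 - s/4)) (s/4)"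
    and x'_k: "apply_bcontfun x' k = ?w ^ m * y"
    using Suc.IH[OF x'(1)] by blast
  show ?case
  proof (cases "x = f_map s x'")
    case True
    have "cmod (apply_bcontfun x' k) = s ^ m * cmod y"
      using assms(1) by (simp add: x'_k norm_mult norm_power)
    also have "\<dots> \<le> 1 * 1"
      using assms norm_le_one_if_in_cball[OF y] by (intro mult_mono power_le_one) auto
    finally have "s/4 * cmod (apply_bcontfun x' k) \<le> s/4"
      using assms(1) mult_left_mono[of _ 1 "s/4"] by simp
    moreover have "dist (complex_of_real (1 - s/4)) (apply_bcontfun x k) = s/4 * cmod (apply_bcontfun x' k)"
      using True assms(1) by (simp add: dist_norm norm_mult)
    ultimately have "dist (complex_of_real (1 - s/4)) (apply_bcontfun x k) \<le> s/4" by simp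
    then show ?thesis by (intro exI[of _ 0] bexI[of _ "apply_bcontfun x k"]) simp_all
  next
    case False
    then have "apply_bcontfun x k = ?w ^ Suc m * y"
      using x'(2) x'_k by (simp add: algebra_simps)
    then show ?thesis using y by blast
  qed
qed

lemma Re_cis_mult_nonneg:
  assumes y: "y \<in> cball (complex_of_real (1 - s/4)) (s/4)" and "s \<le> 1"
    and "0 \<le> \<phi>" "\<phi> \<le> pi / 3"
  shows "0 \<le> Re (cis \<phi> * y)"
proof -
  define c where "c = complex_of_real (1 - s/4)"
  have "1/2 \<le> cos \<phi>"
    using cos_monotone_0_pi_le[OF assms(3,4)] cos_60 by simp
  then have "1/2 * (1 - s/4) \<le> cos \<phi> * (1 - s/4)"
    using \<open>s \<le> 1\<close> by (intro mult_right_mono) auto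
  moreover have "Re (cis \<phi> * c) = cos \<phi> * (1 - s/4)" by (simp add: c_def)
  moreover have "- (s/4) \<le> Re (cis \<phi> * (y - c))"
  proof -
    have "\<bar>Re (cis \<phi> * (y - c))\<bar> \<le> cmod (y - c)"
      using abs_Re_le_cmod[of "cis \<phi> * (y - c)"] by (simp add: norm_mult)
    then show ?thesis using y by (simp add: c_def dist_norm norm_minus_commute)
  qed
  moreover have "Re (cis \<phi> * y) = Re (cis \<phi> * c) + Re (cis \<phi> * (y - c))"
    by (simp add: algebra_simps)
  ultimately show ?thesis using \<open>s \<le> 1\<close> by argo
qed

lemma ifs_orbit_coord_far_from_minus_one:
  assumes "0 \<le> s" "s < 1" "s ^ M \<le> 1/4" "x \<in> ifs_orbit (f_map s) (g_map s) ones"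
  shows "3/4 \<le> cmod (apply_bcontfun x (2 * M) + 1)"
proof -
  define K where "K = 2 * M"
  define \<theta> where "\<theta> = pi / (2 * real (K + 1))"
  obtain n where "x \<in> ifs_level (f_map s) (g_map s) ones n"
    using assms(4) unfolding ifs_orbit_def by blast
  then obtain m y where y: "y \<in> cball (complex_of_real (1 - s/4)) (s/4)"
    and "apply_bcontfun x K = (complex_of_real s * cis \<theta>) ^ m * y"
    using ifs_level_coord_eq[OF assms(1) less_imp_le[OF assms(2)], of x n K] unfolding \<theta>_def by blast
  then have x_K: "apply_bcontfun x K = complex_of_real (s ^ m) * (cis (real m * \<theta>) * y)"
    by (simp add: power_mult_distrib Complex.DeMoivre)
  show ?thesis
  proof (cases "M \<le> m")
    case True
    have "cmod (apply_bcontfun x K) = s ^ m * cmod y"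
      using assms(1) by (simp add: x_K norm_mult norm_power)
    also have "\<dots> \<le> 1/4 * 1"
      using power_decreasing[OF True, of s] assms norm_le_one_if_in_cball[OF y]
      by (intro mult_mono) auto
    finally have "cmod (apply_bcontfun x K) \<le> 1/4" by simp
    then show ?thesis
      using norm_triangle_ineq4[of "apply_bcontfun x K + 1" "apply_bcontfun x K"] by (simp add: K_def)
  next
    case False
    have "pi * (real m * 3) \<le> pi * (2 + real M * 4)"
      using False by (intro mult_left_mono) simp_all
    then have "real m * \<theta> \<le> pi / 3"
      by (simp add: \<theta>_def K_def field_simps distrib_left)
    then have "0 \<le> Re (cis (real m * \<theta>) * y)"
      using assms(2) by (intro Re_cis_mult_nonneg[OF y]) (simp_all add: \<theta>_def)
    then have "1 \<le> Re (apply_bcontfun x K + 1)"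
      using assms(1) by (simp add: x_K)
    also have "\<dots> \<le> cmod (apply_bcontfun x K + 1)" by (rule complex_Re_le_cmod)
    finally show ?thesis by (simp add: K_def)
  qed
qed

lemma attractor_coord_far_from_minus_one:
  assumes "0 \<le> s" "s < 1"
  obtains K where "\<And>x. x \<in> attractor s \<Longrightarrow> 3/4 \<le> cmod (apply_bcontfun x K + 1)"
proof -
  obtain M where M: "s ^ M < 1/4"
    using real_arch_pow_inv[of "1/4" s] assms by auto
  have "continuous_on UNIV (\<lambda>x::linf. apply_bcontfun x (2 * M))"
    by (intro lipschitz_on_continuous_on[where L = 1] lipschitz_onI) (simp_all add: dist_bounded)
  then have "closed {x::linf. 3/4 \<le> cmod (apply_bcontfun x (2 * M) + 1)}"
    by (intro closed_Collect_le continuous_intros)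
  moreover have "ifs_orbit (f_map s) (g_map s) ones \<subseteq> {x. 3/4 \<le> cmod (apply_bcontfun x (2 * M) + 1)}"
    using ifs_orbit_coord_far_from_minus_one[OF assms] M by fastforce
  ultimately have "attractor s \<subseteq> {x. 3/4 \<le> cmod (apply_bcontfun x (2 * M) + 1)}"
    unfolding attractor_eq_closure_ifs_orbit[OF assms] by (rule closure_minimal[rotated])
  then show ?thesis using that by blast
qed

lemma g_map_funpow_ones_half_turn:
  "apply_bcontfun ((g_map t ^^ (2 * (K + 1))) ones) K = - complex_of_real (t ^ (2 * (K + 1)))"
proof -
  define n where "n = 2 * (K + 1)"
  have "real n * (pi / (2 * real (K + 1))) = pi" by (simp add: n_def)
  then have "apply_bcontfun ((g_map t ^^ n) ones) K = - complex_of_real (t ^ n)"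
    by (simp add: g_map_funpow_apply power_mult_distrib Complex.DeMoivre)
  then show ?thesis unfolding n_def .
qed

lemma dist_ge_half_if_coord_far:
  fixes p x :: linf
  assumes "3/4 \<le> cmod (apply_bcontfun x K + 1)" "apply_bcontfun p K = - complex_of_real r"
    and "3/4 \<le> r" "r \<le> 1"
  shows "1/2 \<le> dist p x"
proof -
  have "cmod (apply_bcontfun x K + 1)
      \<le> cmod (apply_bcontfun x K + complex_of_real r) + cmod (1 - complex_of_real r)"
    using norm_triangle_ineq[of "apply_bcontfun x K + complex_of_real r" "1 - complex_of_real r"]
    by simp
  also have "cmod (1 - complex_of_real r) = 1 - r"
  proof -
    have "1 - complex_of_real r = complex_of_real (1 - r)" by simp
    then show ?thesis using assms(4) by (metis abs_of_nonneg diff_ge_0_iff_ge norm_of_real)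
  qed
  also have "cmod (apply_bcontfun x K + complex_of_real r) = dist (apply_bcontfun p K) (apply_bcontfun x K)"
    by (simp add: assms(2) dist_norm norm_minus_commute add.commute)
  also have "\<dots> \<le> dist p x" by (rule dist_bounded)
  finally show ?thesis using assms(1,3) by simp
qed

lemma hausdorff_dist_attractor_ge_half:
  assumes "0 \<le> s" "s < 1"
  shows "\<exists>t0<1. \<forall>t\<in>{t0..<1}. 1/2 \<le> hausdorff_dist (attractor t) (attractor s)"
proof -
  obtain K where far: "\<And>x. x \<in> attractor s \<Longrightarrow> 3/4 \<le> cmod (apply_bcontfun x K + 1)"
    using attractor_coord_far_from_minus_one[OF assms] by metis
  define n where "n = 2 * (K + 1)"
  define t0 :: real where "t0 = 1 - 1 / (4 * real n)"
  have n: "2 \<le> real n" by (simp add: n_def)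
  have "1/2 \<le> hausdorff_dist (attractor t) (attractor s)" if "t \<in> {t0..<1}" for t
  proof -
    have "1 / (4 * real n) \<le> 1" using n by simp
    then have t: "0 \<le> t" "t < 1" using that by (auto simp: t0_def)
    define p where "p = (g_map t ^^ n) ones"
    have "p \<in> attractor t"
      unfolding p_def
      by (rule subsetD[OF ifs_orbit_subset_attractor[OF t] subsetD[OF ifs_level_subset_ifs_orbit funpow_in_ifs_level]])
    have "1 - real n * (1 - t) \<le> t ^ n"
      using Bernoulli_inequality[of "t - 1" n] t by (simp add: algebra_simps)
    moreover have "real n * (1 - t) \<le> 1/4"
      using that n mult_left_mono[of "1 - t" "1 / (4 * real n)" "real n"] by (simp add: t0_def)
    ultimately have "3/4 \<le> t ^ n" by simp
    have "1/2 \<le> dist p x" if "x \<in> attractor s" for x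
      using far[OF that] g_map_funpow_ones_half_turn[where t = t and K = K, folded n_def p_def]
        \<open>3/4 \<le> t ^ n\<close> power_le_one[OF t(1) less_imp_le[OF t(2)]]
      by (rule dist_ge_half_if_coord_far)
    then have "1/2 \<le> infdist p (attractor s)"
      unfolding infdist_notempty[OF attractor_nonempty[OF assms]]
      by (intro cINF_greatest attractor_nonempty[OF assms])
    also have "\<dots> \<le> hausdorff_dist (attractor t) (attractor s)"
      using compact_imp_bounded[OF compact_attractor[OF t]] attractor_nonempty[OF assms] \<open>p \<in> attractor t\<close>
      by (rule infdist_le_hausdorff_dist)
    finally show ?thesis .
  qed
  moreover have "t0 < 1" using n by (simp add: t0_def)
  ultimately show ?thesis by blast
qed

lemma attractors_not_hausdorff_convergent:
  assumes t: "\<forall>n. tn n \<in> {0..<1}" "tn \<longlonglongrightarrow> 1"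
    and K: "K \<noteq> {}" "compact K"
    and lim: "(\<lambda>n. hausdorff_dist (attractor (tn n)) K) \<longlonglongrightarrow> 0"
  shows False
proof -
  have bounded_attractor: "attractor (tn n) \<noteq> {}" "bounded (attractor (tn n))" for n
    using t(1) attractor_nonempty compact_imp_bounded[OF compact_attractor] by auto
  have close: "\<forall>\<^sub>F n in sequentially. hausdorff_dist (attractor (tn n)) K < 1/4"
    using order_tendstoD(2)[OF lim, of "1/4"] by simp
  then obtain N where N: "hausdorff_dist (attractor (tn N)) K < 1/4"
    using eventually_happens'[OF sequentially_bot close] by blast
  obtain t0 where "t0 < 1" and sep: "\<And>t. t \<in> {t0..<1} \<Longrightarrow>
      1/2 \<le> hausdorff_dist (attractor t) (attractor (tn N))"
    using hausdorff_dist_attractor_ge_half[of "tn N"] t(1) by auto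
  obtain n where "t0 < tn n" "hausdorff_dist (attractor (tn n)) K < 1/4"
    using eventually_happens'[OF _ eventually_conj[OF order_tendstoD(1)[OF t(2) \<open>t0 < 1\<close>] close]]
    by auto
  then have "1/2 \<le> hausdorff_dist (attractor (tn n)) (attractor (tn N))"
    using sep t(1) by simp
  also have "\<dots> \<le> hausdorff_dist (attractor (tn n)) K + hausdorff_dist K (attractor (tn N))"
    using bounded_attractor K compact_imp_bounded by (intro hausdorff_dist_triangle) auto
  also have "\<dots> < 1/2"
    using \<open>hausdorff_dist (attractor (tn n)) K < 1/4\<close> N by (simp add: hausdorff_dist_commute)
  finally show False by simp
qed

theorem mainTheorem14:
  shows "(\<nexists>tn :: nat \<Rightarrow> real. (\<forall>n. tn n \<in> {0..<1}) \<and> tn \<longlonglongrightarrow> 1 \<and>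
            (\<exists>K. K \<noteq> {} \<and> compact K \<and>
                 (\<lambda>n. hausdorff_dist (attractor (tn n)) K) \<longlonglongrightarrow> 0))
      \<and> (\<forall>s\<in>{1/2..<1}. \<exists>t0<1. \<forall>t\<in>{t0..<1}.
            hausdorff_dist (attractor t) (attractor s) \<ge> 1/2)"
proof (intro conjI)
  show "\<nexists>tn :: nat \<Rightarrow> real. (\<forall>n. tn n \<in> {0..<1}) \<and> tn \<longlonglongrightarrow> 1 \<and>
          (\<exists>K. K \<noteq> {} \<and> compact K \<and> (\<lambda>n. hausdorff_dist (attractor (tn n)) K) \<longlonglongrightarrow> 0)"
    using attractors_not_hausdorff_convergent by blast
  show "\<forall>s\<in>{1/2..<1}. \<exists>t0<1. \<forall>t\<in>{t0..<1}. hausdorff_dist (attractor t) (attractor s) \<ge> 1/2"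
    using hausdorff_dist_attractor_ge_half by simp
qed

end
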